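(* Let $s\colon\mathbb{R}\to[0,\infty)$ be convex and lower semi-continuous with $s(0)=0$, and let $\kappa,\alpha>0$. Suppose there exist $b,c>0$ such that for all $x\in\mathbb{R}$: $$|x|\le \min\big(\operatorname{prox}_{\alpha s}^{-1}(c\kappa)\big)\ \Longrightarrow\ |\operatorname{prox}_{\alpha s}(x)|\le \frac{\kappa^2}{\kappa^2+\alpha b}|x|.$$ Then for all $y\in\mathbb{R}$: if $|y|\le c\kappa$ then $s(y)\ge \frac b2\,|y/\kappa|^2$; and if $|y|>c\kappa$ then $s(y)\ge bc\,|y/\kappa|-\frac{bc^2}{2}$.
   Context: For a proper convex lower semi-continuous $f\colon\mathbb{R}\to\mathbb{R}\cup\{\infty\}$, $\operatorname{prox}_f(x)=\operatorname{argmin}_{y\in\mathbb{R}}\tfrac12|x-y|^2+f(y)$; one has $\operatorname{prox}_f=(\mathrm{id}+\partial f)^{-1}$. $\operatorname{prox}_{\alpha s}^{-1}(c\kappa)=\{x:\operatorname{prox}_{\alpha s}(x)=c\kappa\}$ is a closed interval, and $\min$ of it denotes its smallest element (infimum). *)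

theory Defs
  imports "HOL-Analysis.Analysis"
begin

definition lsc_real :: "(real \<Rightarrow> real) \<Rightarrow> bool" where
  "lsc_real f \<longleftrightarrow> (\<forall>t. closed {x. f x \<le> t})"

text \<open>Proximal operator: the (unique, for proper convex lsc f) minimiser of
  1/2 |x - y|^2 + f y over y.\<close>
definition prox :: "(real \<Rightarrow> real) \<Rightarrow> real \<Rightarrow> real" where
  "prox f x = (THE y. \<forall>z. (1/2) * (x - y)^2 + f y \<le> (1/2) * (x - z)^2 + f z)"

end

theory Submission
  imports Defs
begin

text \<open>Write \<open>f = \<alpha> s\<close> and \<open>q = b / \<kappa>\<^sup>2\<close>. For a nonnegative convex \<open>f\<close>, \<open>x - prox f x\<close> is a
  subgradient of \<open>f\<close> at \<open>prox f x\<close>, and \<open>prox f\<close> is monotone, continuous and onto. Every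
  \<open>t\<close> with \<open>\<bar>t\<bar> \<le> c\<kappa>\<close> is \<open>prox f x\<close> for some \<open>x\<close> with \<open>\<bar>t\<bar> \<le> \<kappa>\<^sup>2/(\<kappa>\<^sup>2 + \<alpha> b) \<bar>x\<bar>\<close>: the hypothesis gives
  this for \<open>\<bar>x\<bar>\<close> up to the least preimage of \<open>c\<kappa>\<close>, and beyond it the bound is automatic.
  The resulting subgradient \<open>(x - t)/\<alpha>\<close> of \<open>s\<close> at \<open>t\<close> has slope at least \<open>q t\<close> in the
  direction away from \<open>0\<close>. Summing these supporting lines along \<open>[0, y]\<close> yields
  \<open>s y \<ge> q y\<^sup>2/2\<close> for \<open>\<bar>y\<bar> \<le> c\<kappa>\<close>, and the supporting line at \<open>\<plusminus>c\<kappa>\<close> continues it linearly.\<close>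

locale nonneg_convex =
  fixes f :: "real \<Rightarrow> real"
  assumes nonneg: "\<And>x. 0 \<le> f x" and convex: "convex_on UNIV f"
begin

lemma continuous: "continuous_on A f"
  using convex_on_continuous[OF open_UNIV convex] continuous_on_subset by blast

lemma ex_prox_minimiser: "\<exists>y. \<forall>z. (1/2) * (x - y)^2 + f y \<le> (1/2) * (x - z)^2 + f z"
proof -
  define R where "R = 2 * f x + 1"
  have R1: "R \<ge> 1" using nonneg[of x] by (simp add: R_def)
  have "continuous_on (cball x R) (\<lambda>y. (1/2) * (x - y)^2 + f y)"
    by (intro continuous_intros continuous)
  then obtain y where y: "y \<in> cball x R"
    "\<forall>z\<in>cball x R. (1/2) * (x - y)^2 + f y \<le> (1/2) * (x - z)^2 + f z"
    using continuous_attains_inf[of "cball x R"] R1 by fastforce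
  have "(1/2) * (x - y)^2 + f y \<le> (1/2) * (x - z)^2 + f z" for z
  proof (cases "z \<in> cball x R")
    case False
    \<comment> \<open>outside the ball the objective exceeds its value at \<open>x\<close>\<close>
    then have "R < \<bar>x - z\<bar>" by (simp add: dist_real_def)
    moreover have "\<bar>x - z\<bar> * 1 \<le> \<bar>x - z\<bar> * \<bar>x - z\<bar>"
      using \<open>R < \<bar>x - z\<bar>\<close> R1 by (intro mult_left_mono) auto
    ultimately have "R < (x - z)^2" by (simp add: power2_eq_square)
    moreover have "(1/2) * (x - y)^2 + f y \<le> f x" using y(2)[rule_format, of x] R1 by simp
    ultimately show ?thesis using nonneg[of z] by (simp add: R_def)
  qed (use y in blast)
  then show ?thesis by blast
qed

lemma prox_minimiser_unique:
  assumes "\<forall>z. (1/2) * (x - y1)^2 + f y1 \<le> (1/2) * (x - z)^2 + f z"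
    and "\<forall>z. (1/2) * (x - y2)^2 + f y2 \<le> (1/2) * (x - z)^2 + f z"
  shows "y1 = y2"
proof (rule ccontr)
  assume "y1 \<noteq> y2"
  define m where "m = (1/2) * y1 + (1/2) * y2"
  have "f m \<le> (1/2) * f y1 + (1/2) * f y2"
    using convex_onD[OF convex, of "1/2" y1 y2] by (simp add: m_def)
  moreover have "(x - m)^2 = ((x - y1)^2 + (x - y2)^2)/2 - (y1 - y2)^2/4"
    unfolding m_def by (simp add: power2_eq_square field_simps)
  moreover have "(y1 - y2)^2 > 0" using \<open>y1 \<noteq> y2\<close> by simp
  ultimately show False using assms[THEN spec, of m] by (simp add: field_simps)
qed

lemma prox_minimal: "(1/2) * (x - prox f x)^2 + f (prox f x) \<le> (1/2) * (x - z)^2 + f z"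
proof -
  obtain y where y: "\<forall>z. (1/2) * (x - y)^2 + f y \<le> (1/2) * (x - z)^2 + f z"
    using ex_prox_minimiser by blast
  then have "prox f x = y"
    unfolding prox_def by (blast intro: the_equality prox_minimiser_unique)
  with y show ?thesis by simp
qed

lemma prox_subgradient: "f (prox f x) + (x - prox f x) * (z - prox f x) \<le> f z"
proof -
  define y where "y = prox f x"
  define A where "A = f y - f z + (x - y) * (z - y)"
  \<comment> \<open>compare with the objective at the points \<open>(1 - t) y + t z\<close> and let \<open>t \<rightarrow> 0\<close>\<close>
  have A_le: "A \<le> t * ((z - y)^2 / 2)" if t: "0 < t" "t \<le> 1" for t
  proof -
    define w where "w = (1 - t) * y + t * z"
    have "(1/2) * (x - y)^2 + f y \<le> (1/2) * (x - w)^2 + f w"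
      using prox_minimal y_def by blast
    moreover have "f w \<le> (1 - t) * f y + t * f z"
      using convex_onD[OF convex, of t y z] t by (simp add: w_def)
    moreover have "(x - w)^2 = (x - y)^2 - 2 * t * ((x - y) * (z - y)) + t^2 * (z - y)^2"
      unfolding w_def by (simp add: power2_eq_square algebra_simps)
    ultimately have "t * A \<le> t * (t * ((z - y)^2 / 2))"
      by (simp add: A_def power2_eq_square algebra_simps)
    then show ?thesis using t by simp
  qed
  have "A \<le> 0"
  proof (rule field_le_epsilon)
    fix e :: real assume "0 < e"
    define t where "t = min 1 (e / ((z - y)^2 + 1))"
    have pos: "0 < (z - y)^2 + 1" by (simp add: add_nonneg_pos)
    then have "0 < t" "t \<le> 1" using \<open>0 < e\<close> by (auto simp: t_def)
    moreover have "t * ((z - y)^2 / 2) \<le> t * ((z - y)^2 + 1)"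
      using \<open>0 < t\<close> by (intro mult_left_mono) auto
    moreover have "t * ((z - y)^2 + 1) \<le> e"
      using pos by (simp add: t_def min_def divide_le_eq mult.commute split: if_splits)
    ultimately show "A \<le> 0 + e" using A_le by (metis add_0 order_trans)
  qed
  then show ?thesis by (simp add: A_def y_def)
qed

lemma prox_firmly_nonexpansive: "(prox f b - prox f a)^2 \<le> (b - a) * (prox f b - prox f a)"
  using prox_subgradient[of a "prox f b"] prox_subgradient[of b "prox f a"]
  by (simp add: power2_eq_square algebra_simps)

lemma prox_mono: "a \<le> b \<Longrightarrow> prox f a \<le> prox f b"
  using prox_firmly_nonexpansive[of b a]
  by (smt (verit) mult_nonneg_nonpos zero_less_power2)

lemma prox_nonexpansive: "\<bar>prox f b - prox f a\<bar> \<le> \<bar>b - a\<bar>"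
proof -
  define d where "d = prox f b - prox f a"
  have "\<bar>d\<bar> * \<bar>d\<bar> = d^2" by (simp add: power2_eq_square abs_mult_self_eq)
  also have "\<dots> \<le> (b - a) * d" using prox_firmly_nonexpansive[of b a] by (simp add: d_def)
  also have "\<dots> \<le> \<bar>b - a\<bar> * \<bar>d\<bar>" by (metis abs_ge_self abs_mult)
  finally have "\<bar>d\<bar> * \<bar>d\<bar> \<le> \<bar>b - a\<bar> * \<bar>d\<bar>" .
  then show ?thesis
    unfolding d_def[symmetric] by (cases "d = 0") (simp, metis mult_le_cancel_right_pos zero_less_abs_iff)
qed

lemma continuous_on_prox: "continuous_on A (prox f)"
  by (rule lipschitz_on_continuous_on[of 1])
    (simp add: lipschitz_on_def dist_real_def prox_nonexpansive)

lemma prox_gt: "M + f (M + 1) + 1 < x \<Longrightarrow> M < prox f x"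
  using prox_subgradient[of x "M + 1"] nonneg[of "prox f x"] nonneg[of "M + 1"]
  by (smt (verit) mult_le_cancel_left1)

lemma prox_lt: "x < M - f (M - 1) - 1 \<Longrightarrow> prox f x < M"
  using prox_subgradient[of x "M - 1"] nonneg[of "prox f x"] nonneg[of "M - 1"]
  by (smt (verit) mult_le_cancel_left1 mult_minus_left mult_minus_right)

lemma surj_prox: "\<exists>x. prox f x = y"
proof -
  define a where "a = y - f (y - 1) - 2"
  define c where "c = y + f (y + 1) + 2"
  have "prox f a \<le> y" "y \<le> prox f c" "a \<le> c"
    using prox_lt[of a y] prox_gt[of y c] nonneg[of "y - 1"] nonneg[of "y + 1"]
    by (auto simp: a_def c_def)
  then show ?thesis using IVT'[of "prox f" a y c] continuous_on_prox by blast
qed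

lemma prox_zero:
  assumes "f 0 = 0" shows "prox f 0 = 0"
proof -
  have "(prox f 0)^2 / 2 + f (prox f 0) \<le> 0" using prox_minimal[of 0 0] assms by simp
  then have "(prox f 0)^2 \<le> 0" using nonneg[of "prox f 0"] by linarith
  then show ?thesis by simp
qed

lemma prox_least_preimage:
  assumes "f 0 = 0" "0 < p"
  shows "prox f (Inf {z. prox f z = p}) = p" and "p \<le> Inf {z. prox f z = p}"
proof -
  define S where "S = {z. prox f z = p}"
  have ge: "p \<le> z" if "z \<in> S" for z
  proof -
    have "0 \<le> z" using prox_mono[of z 0] prox_zero assms that by (force simp: S_def)
    then show ?thesis using prox_nonexpansive[of z 0] prox_zero assms that by (simp add: S_def)
  qed
  have "S \<noteq> {}" using surj_prox by (auto simp: S_def)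
  moreover have "bdd_below S" unfolding bdd_below_def using ge by blast
  moreover have "closed S"
    unfolding S_def by (intro closed_Collect_eq continuous_on_prox continuous_on_const)
  ultimately have "Inf S \<in> S" by (rule closed_contains_Inf)
  then show "prox f (Inf {z. prox f z = p}) = p" and "p \<le> Inf {z. prox f z = p}"
    using ge by (auto simp: S_def)
qed

lemma prox_radial_subgradient:
  assumes "f 0 = 0" "0 < k" "\<bar>prox f x\<bar> \<le> k * \<bar>x\<bar>" "prox f x \<in> closed_segment 0 u"
  shows "f (prox f x) + (1/k - 1) * prox f x * (u - prox f x) \<le> f u"
proof (cases "prox f x = 0")
  case True
  then show ?thesis using nonneg[of u] assms(1) by simp
next
  case False
  define p where "p = prox f x"
  have pos: "p / k \<le> x \<and> p \<le> u" if "0 < p"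
  proof -
    have "0 < x" using that prox_mono[of x 0] prox_zero[OF assms(1)] by (force simp: p_def)
    then show ?thesis
      using that assms(2-4)
      by (simp add: p_def closed_segment_eq_real_ivl pos_divide_le_eq mult.commute split: if_splits)
  qed
  have neg: "x \<le> p / k \<and> u \<le> p" if "p < 0"
  proof -
    have "x < 0" using that prox_mono[of 0 x] prox_zero[OF assms(1)] by (force simp: p_def)
    then show ?thesis
      using that assms(2-4)
      by (simp add: p_def closed_segment_eq_real_ivl pos_le_divide_eq mult.commute split: if_splits)
  qed
  have "0 \<le> (x - p / k) * (u - p)"
    using pos neg False by (cases "0 < p") (auto simp: p_def zero_le_mult_iff)
  then have "(1/k - 1) * p * (u - p) \<le> (x - p) * (u - p)" by (simp add: algebra_simps)
  then show ?thesis using prox_subgradient[of x u] by (simp add: p_def)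
qed

lemma radial_subgradient_of_prox_contraction:
  assumes "f 0 = 0" "0 < p" "0 < k"
    and contraction: "\<And>x. \<bar>x\<bar> \<le> Inf {z. prox f z = p} \<Longrightarrow> \<bar>prox f x\<bar> \<le> k * \<bar>x\<bar>"
    and "\<bar>t\<bar> \<le> p" "t \<in> closed_segment 0 u"
  shows "f t + (1/k - 1) * t * (u - t) \<le> f u"
proof -
  define x0 where "x0 = Inf {z. prox f z = p}"
  have "p \<le> k * x0"
    using contraction[of x0] prox_least_preimage[OF assms(1,2)] assms(2) by (simp add: x0_def)
  obtain x where x: "prox f x = t" using surj_prox by blast
  have "\<bar>t\<bar> \<le> k * \<bar>x\<bar>"
  proof (cases "\<bar>x\<bar> \<le> x0")
    case True
    then show ?thesis using contraction[of x] x by (simp add: x0_def)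
  next
    case False
    then have "k * x0 \<le> k * \<bar>x\<bar>" using assms(3) by simp
    then show ?thesis using \<open>p \<le> k * x0\<close> assms(5) by linarith
  qed
  then show ?thesis using prox_radial_subgradient[OF assms(1,3)] x assms(6) by blast
qed

end

lemma quadratic_lower_bound_of_radial_subgradients:
  fixes f :: "real \<Rightarrow> real"
  assumes f0: "f 0 = 0"
    and growth: "\<And>t u. \<bar>t\<bar> \<le> R \<Longrightarrow> t \<in> closed_segment 0 u \<Longrightarrow> f t + q * t * (u - t) \<le> f u"
    and "\<bar>u\<bar> \<le> R"
  shows "q / 2 * u^2 \<le> f u"
proof -
  define h where "h v = f v - q / 2 * v^2" for v
  \<comment> \<open>the supporting line at \<open>v = u (n + 1)/(n + 2)\<close> combined with the bound for \<open>v\<close>\<close>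
  have approx: "0 \<le> h u + q / 2 * u^2 / Suc n" if "\<bar>u\<bar> \<le> R" for n u
    using that
  proof (induction n arbitrary: u)
    case 0
    then show ?case using growth[of 0 u] f0 by (simp add: h_def)
  next
    case (Suc n)
    define N where "N = real (Suc n)"
    define w where "w = u / (N + 1)"
    define v where "v = N * w"
    have N_pos: "0 < N" by (simp add: N_def)
    have u_eq: "u = (N + 1) * w" using N_pos by (simp add: w_def)
    have v_seg: "v \<in> closed_segment 0 u"
      unfolding closed_segment_def v_def w_def using N_pos by (auto intro!: exI[of _ "N / (N + 1)"])
    then have v_le: "\<bar>v\<bar> \<le> R"
      using Suc.prems by (auto simp: closed_segment_eq_real_ivl split: if_splits)
    have "(u - v)^2 + v^2 / N = (N + 1) * w^2"
      using N_pos by (simp add: u_eq v_def power2_eq_square field_simps)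
    also have "\<dots> = u^2 / (N + 1)" using N_pos by (simp add: u_eq power2_eq_square)
    finally have "(u - v)^2 + v^2 / Suc n = u^2 / Suc (Suc n)" by (simp add: N_def)
    then have sum_eq: "q / 2 * (u - v)^2 + q / 2 * v^2 / Suc n = q / 2 * u^2 / Suc (Suc n)"
      by (metis (no_types, lifting) distrib_left times_divide_eq_right)
    have "h v \<le> h u + q / 2 * (u - v)^2"
      using growth[OF v_le v_seg] by (simp add: h_def power2_eq_square algebra_simps)
    then show ?case using Suc.IH[OF v_le] sum_eq by linarith
  qed
  have "(\<lambda>n. h u + q / 2 * u^2 / Suc n) \<longlonglongrightarrow> h u + 0"
    by (intro tendsto_intros LIMSEQ_Suc[OF lim_const_over_n])
  then have "0 \<le> h u" using approx[OF assms(3)] by (simp add: LIMSEQ_le_const)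
  then show ?thesis by (simp add: h_def)
qed

lemma linear_lower_bound_of_radial_subgradients:
  fixes f :: "real \<Rightarrow> real"
  assumes f0: "f 0 = 0"
    and growth: "\<And>t u. \<bar>t\<bar> \<le> R \<Longrightarrow> t \<in> closed_segment 0 u \<Longrightarrow> f t + q * t * (u - t) \<le> f u"
    and "0 \<le> R" "R < \<bar>u\<bar>"
  shows "q * R * \<bar>u\<bar> - q / 2 * R^2 \<le> f u"
proof -
  define w where "w = sgn u * R"
  have w_abs: "\<bar>w\<bar> = R" and w_seg: "w \<in> closed_segment 0 u"
    using assms(3,4) by (auto simp: w_def abs_mult closed_segment_eq_real_ivl sgn_if)
  have "q / 2 * w^2 \<le> f w"
    using quadratic_lower_bound_of_radial_subgradients[OF f0 growth] w_abs by simp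
  moreover have "f w + q * w * (u - w) \<le> f u" using growth w_abs w_seg by simp
  moreover have "q / 2 * w^2 + q * w * (u - w) = q * R * \<bar>u\<bar> - q / 2 * R^2"
    using assms(3,4) by (auto simp: w_def sgn_if power2_eq_square algebra_simps)
  ultimately show ?thesis by linarith
qed

theorem lemma2p3:
  fixes s :: "real \<Rightarrow> real" and \<kappa> \<alpha> b c :: real
  assumes s_nonneg: "\<And>x. s x \<ge> 0"
    and s_convex: "convex_on UNIV s"
    and s_lsc: "lsc_real s"
    and s0: "s 0 = 0"
    and kappa_pos: "\<kappa> > 0" and alpha_pos: "\<alpha> > 0"
    and b_pos: "b > 0" and c_pos: "c > 0"
    and hyp: "\<And>x. \<bar>x\<bar> \<le> Inf {z. prox (\<lambda>y. \<alpha> * s y) z = c * \<kappa>} \<Longrightarrow>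
                 \<bar>prox (\<lambda>y. \<alpha> * s y) x\<bar> \<le> \<kappa>^2 / (\<kappa>^2 + \<alpha> * b) * \<bar>x\<bar>"
  shows "\<forall>y. (\<bar>y\<bar> \<le> c * \<kappa> \<longrightarrow> s y \<ge> b / 2 * \<bar>y / \<kappa>\<bar>^2) \<and>
             (\<bar>y\<bar> > c * \<kappa> \<longrightarrow> s y \<ge> b * c * \<bar>y / \<kappa>\<bar> - b * c^2 / 2)"
proof -
  define f where "f = (\<lambda>y. \<alpha> * s y)"
  interpret nonneg_convex f
    by unfold_locales
      (use s_nonneg alpha_pos s_convex in \<open>auto simp: f_def intro!: convex_on_cmul\<close>)
  define q where "q = b / \<kappa>^2"
  have f0: "f 0 = 0" by (simp add: f_def s0)
  have k_pos: "0 < \<kappa>^2 / (\<kappa>^2 + \<alpha> * b)"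
    using kappa_pos alpha_pos b_pos by (simp add: add_pos_pos)
  have contraction: "\<And>x. \<bar>x\<bar> \<le> Inf {z. prox f z = c * \<kappa>} \<Longrightarrow>
      \<bar>prox f x\<bar> \<le> \<kappa>^2 / (\<kappa>^2 + \<alpha> * b) * \<bar>x\<bar>"
    unfolding f_def by (rule hyp)
  have growth: "s t + q * t * (u - t) \<le> s u" if "\<bar>t\<bar> \<le> c * \<kappa>" "t \<in> closed_segment 0 u" for t u
  proof -
    have coeff: "1 / (\<kappa>^2 / (\<kappa>^2 + \<alpha> * b)) - 1 = \<alpha> * q"
      using kappa_pos by (simp add: q_def field_simps)
    have "f t + (1 / (\<kappa>^2 / (\<kappa>^2 + \<alpha> * b)) - 1) * t * (u - t) \<le> f u"
      using radial_subgradient_of_prox_contraction[where p = "c * \<kappa>", OF f0 _ k_pos contraction]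
        that c_pos kappa_pos by simp
    then have "f t + \<alpha> * q * t * (u - t) \<le> f u" unfolding coeff .
    then have "\<alpha> * (s t + q * t * (u - t)) \<le> \<alpha> * s u" by (simp add: f_def algebra_simps)
    then show ?thesis using alpha_pos by simp
  qed
  have "b / 2 * \<bar>y / \<kappa>\<bar>^2 = q / 2 * y^2" for y by (simp add: q_def power_divide)
  moreover have "b * c * \<bar>y / \<kappa>\<bar> - b * c^2 / 2 = q * (c * \<kappa>) * \<bar>y\<bar> - q / 2 * (c * \<kappa>)^2" for y
    using kappa_pos by (simp add: q_def power2_eq_square field_simps)
  ultimately show ?thesis
    using quadratic_lower_bound_of_radial_subgradients[OF s0 growth]
      linear_lower_bound_of_radial_subgradients[OF s0 growth] c_pos kappa_pos by simp
qed

end
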